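(* Let $\mathcal{M}\subseteq\mathbb{R}^d$ be a compact embedded $C^2$-submanifold without boundary with reach $\tau_{\mathcal{M}}>0$, let $\tau\in(0,\tau_{\mathcal{M}})$ and $\eta>0$. Then $$\inf_{x\in\mathcal{T}(\tau)}\Big(\tfrac12\operatorname{dist}_{\mathcal{M}\setminus B_\eta(\pi(x))}(x)^2-\tfrac12\operatorname{dist}_{\mathcal{M}}(x)^2\Big)\ge\frac12\,\frac{\tau_{\mathcal{M}}-\tau}{\tau_{\mathcal{M}}+\tau}\,\eta^2>0.$$
   Context: Reach $\tau_{\mathcal{M}}$: largest $\tau\ge0$ such that $(p,v)\mapsto p+v$ on $\{(p,v):p\in\mathcal{M},v\in N_p\mathcal{M},\|v\|<\tau\}$ is a diffeomorphism onto its image; $\mathcal{T}(\tau)=\{p+v:p\in\mathcal{M},v\in N_p\mathcal{M},\|v\|<\tau\}$; $\pi(x)$ is the unique closest point of $\mathcal{M}$ to $x\in\mathcal{T}(\tau_{\mathcal{M}})$. For a set $A$, $\operatorname{dist}_A(x)=\inf_{a\in A}\|x-a\|$ (with $\inf\emptyset=+\infty$), and $B_\eta(p)$ is the open Euclidean ball of radius $\eta$ centered at $p$. *)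

theory Defs
  imports "HOL-Analysis.Analysis"
begin

definition C1_on :: "'a::real_normed_vector set \<Rightarrow> ('a \<Rightarrow> 'b::real_normed_vector) \<Rightarrow> bool" where
  "C1_on U f \<longleftrightarrow> (\<exists>f'. (\<forall>x\<in>U. (f has_derivative blinfun_apply (f' x)) (at x)) \<and> continuous_on U f')"

definition C2_on :: "'a::real_normed_vector set \<Rightarrow> ('a \<Rightarrow> 'b::real_normed_vector) \<Rightarrow> bool" where
  "C2_on U f \<longleftrightarrow> (\<exists>f'. (\<forall>x\<in>U. (f has_derivative blinfun_apply (f' x)) (at x)) \<and> C1_on U f')"

definition C2_submanifold :: "nat \<Rightarrow> 'a::euclidean_space set \<Rightarrow> bool" where
  "C2_submanifold k M \<longleftrightarrow> k \<le> DIM('a) \<and>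
     (\<forall>p\<in>M. \<exists>U (\<phi>::'a \<Rightarrow> 'a) L. open U \<and> p \<in> U \<and> subspace L \<and> dim L = k \<and>
        C2_on U \<phi> \<and> inj_on \<phi> U \<and> open (\<phi> ` U) \<and>
        (\<exists>\<psi>. C2_on (\<phi> ` U) \<psi> \<and> (\<forall>x\<in>U. \<psi> (\<phi> x) = x)) \<and>
        \<phi> ` (M \<inter> U) = \<phi> ` U \<inter> L)"

definition tangent_space :: "'a::euclidean_space set \<Rightarrow> 'a \<Rightarrow> 'a set" where
  "tangent_space M p = {v. \<exists>\<gamma> (e::real). e > 0 \<and> \<gamma> ` ball 0 e \<subseteq> M \<and> \<gamma> 0 = p \<and>
        (\<gamma> has_vector_derivative v) (at 0)}"

definition normal_space :: "'a::euclidean_space set \<Rightarrow> 'a \<Rightarrow> 'a set" where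
  "normal_space M p = {v. \<forall>w\<in>tangent_space M p. v \<bullet> w = 0}"

definition normal_bundle :: "'a::euclidean_space set \<Rightarrow> real \<Rightarrow> ('a \<times> 'a) set" where
  "normal_bundle M t = {(p, v). p \<in> M \<and> v \<in> normal_space M p \<and> norm v < t}"

definition tube :: "'a::euclidean_space set \<Rightarrow> real \<Rightarrow> 'a set" where
  "tube M t = (\<lambda>(p, v). p + v) ` normal_bundle M t"

definition tube_diffeo :: "'a::euclidean_space set \<Rightarrow> real \<Rightarrow> bool" where
  "tube_diffeo M t \<longleftrightarrow> inj_on (\<lambda>(p, v). p + v) (normal_bundle M t) \<and> open (tube M t) \<and>
     (\<exists>g :: 'a \<Rightarrow> 'a \<times> 'a. C1_on (tube M t) g \<and>
        (\<forall>(p, v)\<in>normal_bundle M t. g (p + v) = (p, v)))"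

definition is_reach :: "'a::euclidean_space set \<Rightarrow> real \<Rightarrow> bool" where
  "is_reach M r \<longleftrightarrow> r \<ge> 0 \<and> tube_diffeo M r \<and> (\<forall>t\<ge>0. tube_diffeo M t \<longrightarrow> t \<le> r)"

definition proj :: "'a::euclidean_space set \<Rightarrow> 'a \<Rightarrow> 'a" where
  "proj M x = (THE p. p \<in> M \<and> dist x p = infdist x M)"

definition dist_set :: "'a::metric_space set \<Rightarrow> 'a \<Rightarrow> ereal" where
  "dist_set A x = (if A = {} then \<infinity> else ereal (infdist x A))"

end

theory Submission imports Defs begin

(* Write x = p + v with v normal at p and |v| < \<tau>. Injectivity of (p, w) \<mapsto> p + w on the
   normal bundle of radius \<tau>M makes p the nearest point of M to p + w for every normal w at p
   with |w| < \<tau>M: a nearest point q has p + w - q normal at q, so (q, p + w - q) would be a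
   second preimage. Taking w in the direction of v with |w| = (\<tau>M + \<tau>)/2 and comparing with
   any q \<in> M gives v \<bullet> (q - p) \<le> \<tau>/(\<tau>M + \<tau>) |q - p|^2, hence
   |x - q|^2 \<ge> |v|^2 + (\<tau>M - \<tau>)/(\<tau>M + \<tau>) |q - p|^2, and |q - p| \<ge> \<eta> off the ball B_\<eta>(p). *)

lemma nearest_point_in_normal_space:
  fixes M :: "'a::euclidean_space set"
  assumes "q \<in> M" and nearest: "\<forall>z\<in>M. dist y q \<le> dist y z"
  shows "y - q \<in> normal_space M q"
  unfolding normal_space_def
proof (intro CollectI ballI)
  fix w assume "w \<in> tangent_space M q"
  then obtain \<gamma> and e :: real where "e > 0" and curve: "\<gamma> ` ball 0 e \<subseteq> M" and "\<gamma> 0 = q"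
    and \<gamma>': "(\<gamma> has_vector_derivative w) (at 0)"
    unfolding tangent_space_def by blast
  have "((\<lambda>s. y - \<gamma> s) has_derivative (\<lambda>h. h *\<^sub>R - w)) (at 0)"
    using \<gamma>' by (auto intro!: derivative_eq_intros simp: has_vector_derivative_def)
  from has_derivative_inner[OF this this]
  have "((\<lambda>s. (y - \<gamma> s) \<bullet> (y - \<gamma> s)) has_real_derivative - 2 * ((y - q) \<bullet> w)) (at 0)"
    unfolding has_field_derivative_def
    by (rule has_derivative_eq_rhs) (auto simp: fun_eq_iff \<open>\<gamma> 0 = q\<close> algebra_simps inner_commute)
  moreover have "(y - \<gamma> 0) \<bullet> (y - \<gamma> 0) \<le> (y - \<gamma> s) \<bullet> (y - \<gamma> s)" if "\<bar>0 - s\<bar> < e" for s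
  proof -
    have "\<gamma> s \<in> M" using curve that by (auto simp: dist_real_def)
    then have "norm (y - q) \<le> norm (y - \<gamma> s)" using nearest by (auto simp: dist_norm)
    then show ?thesis
      using \<open>\<gamma> 0 = q\<close> by (simp add: power2_norm_eq_inner[symmetric] power_mono)
  qed
  ultimately have "- 2 * ((y - q) \<bullet> w) = 0"
    using DERIV_local_min \<open>e > 0\<close> by blast
  then show "(y - q) \<bullet> w = 0" by simp
qed

lemma normal_space_scaleR: "v \<in> normal_space M p \<Longrightarrow> c *\<^sub>R v \<in> normal_space M p"
  by (simp add: normal_space_def)

lemma mem_normal_bundle:
  "(p, v) \<in> normal_bundle M t \<longleftrightarrow> p \<in> M \<and> v \<in> normal_space M p \<and> norm v < t"
  by (simp add: normal_bundle_def)

lemma nearest_point_normal_bundle_eq: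
  fixes M :: "'a::euclidean_space set"
  assumes inj: "inj_on (\<lambda>(p, v). p + v) (normal_bundle M t)"
    and pv: "(p, v) \<in> normal_bundle M t" and "q \<in> M"
    and nearest: "\<forall>z\<in>M. dist (p + v) q \<le> dist (p + v) z"
  shows "q = p"
proof -
  have "p \<in> M" and "norm v < t" using pv by (simp_all add: mem_normal_bundle)
  have "dist (p + v) q \<le> dist (p + v) p" using nearest \<open>p \<in> M\<close> by blast
  with \<open>norm v < t\<close> have "norm (p + v - q) < t" by (simp add: dist_norm)
  with \<open>q \<in> M\<close> nearest_point_in_normal_space[OF \<open>q \<in> M\<close> nearest]
  have "(q, p + v - q) \<in> normal_bundle M t" by (simp add: mem_normal_bundle)
  moreover have "(\<lambda>(p, v). p + v) (q, p + v - q) = (\<lambda>(p, v). p + v) (p, v)"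
    by (simp add: algebra_simps)
  ultimately have "(q, p + v - q) = (p, v)" using inj_onD[OF inj] pv by blast
  then show "q = p" by (simp only: prod.inject)
qed

lemma normal_bundle_nearest_point:
  fixes M :: "'a::euclidean_space set"
  assumes "compact M" and "inj_on (\<lambda>(p, v). p + v) (normal_bundle M t)"
    and pv: "(p, v) \<in> normal_bundle M t"
  shows "\<forall>z\<in>M. dist (p + v) p \<le> dist (p + v) z"
proof -
  have "M \<noteq> {}" using pv by (auto simp: mem_normal_bundle)
  then obtain q where "q \<in> M" and "infdist (p + v) M = dist (p + v) q"
    using infdist_attains_inf compact_imp_closed \<open>compact M\<close> by metis
  then have nearest: "\<forall>z\<in>M. dist (p + v) q \<le> dist (p + v) z"
    using infdist_le by metis
  with nearest_point_normal_bundle_eq[OF assms(2) pv \<open>q \<in> M\<close>] show ?thesis by simp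
qed

lemma infdist_normal_bundle:
  fixes M :: "'a::euclidean_space set"
  assumes "compact M" and "inj_on (\<lambda>(p, v). p + v) (normal_bundle M t)"
    and pv: "(p, v) \<in> normal_bundle M t"
  shows "infdist (p + v) M = norm v"
proof -
  have "p \<in> M" using pv by (simp add: mem_normal_bundle)
  then obtain q where "q \<in> M" and "infdist (p + v) M = dist (p + v) q"
    using infdist_attains_inf compact_imp_closed \<open>compact M\<close> by blast
  moreover have "dist (p + v) p \<le> dist (p + v) q"
    using normal_bundle_nearest_point[OF assms] \<open>q \<in> M\<close> by blast
  moreover have "infdist (p + v) M \<le> dist (p + v) p" using \<open>p \<in> M\<close> by (rule infdist_le)
  ultimately have "infdist (p + v) M = dist (p + v) p" by linarith
  then show ?thesis by (simp add: dist_norm)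
qed

lemma proj_normal_bundle:
  fixes M :: "'a::euclidean_space set"
  assumes "compact M" and inj: "inj_on (\<lambda>(p, v). p + v) (normal_bundle M t)"
    and pv: "(p, v) \<in> normal_bundle M t"
  shows "proj M (p + v) = p"
  unfolding proj_def
proof (rule the_equality)
  show "p \<in> M \<and> dist (p + v) p = infdist (p + v) M"
    using pv infdist_normal_bundle[OF assms] by (simp add: mem_normal_bundle dist_norm)
next
  fix q assume q: "q \<in> M \<and> dist (p + v) q = infdist (p + v) M"
  then have "\<forall>z\<in>M. dist (p + v) q \<le> dist (p + v) z" by (simp add: infdist_le)
  with q show "q = p" using nearest_point_normal_bundle_eq[OF inj pv] by blast
qed

lemma inner_normal_le_within_reach:
  fixes M :: "'a::euclidean_space set"
  assumes "compact M" and inj: "inj_on (\<lambda>(p, v). p + v) (normal_bundle M r)"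
    and "p \<in> M" and "v \<in> normal_space M p" and "q \<in> M" and "0 < \<rho>" and "\<rho> < r"
  shows "2 * \<rho> * (v \<bullet> (q - p)) \<le> norm v * norm (q - p) ^ 2"
proof (cases "v = 0")
  case False
  define w where "w = (\<rho> / norm v) *\<^sub>R v"
  have "norm w = \<rho>" using False \<open>0 < \<rho>\<close> by (simp add: w_def)
  then have "(p, w) \<in> normal_bundle M r"
    using assms(3,4,7) by (simp add: mem_normal_bundle w_def normal_space_scaleR)
  then have "norm w \<le> norm (w - (q - p))"
    using normal_bundle_nearest_point[OF \<open>compact M\<close> inj] \<open>q \<in> M\<close>
    by (fastforce simp: dist_norm algebra_simps)
  then have "norm w ^ 2 \<le> norm (w - (q - p)) ^ 2" by (simp add: power_mono)
  then have "2 * (w \<bullet> (q - p)) \<le> norm (q - p) ^ 2"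
    by (simp add: power2_norm_eq_inner inner_diff_left inner_diff_right inner_commute)
  then have "2 * \<rho> * (v \<bullet> (q - p)) / norm v \<le> norm (q - p) ^ 2"
    by (simp add: w_def)
  then show ?thesis using False by (simp add: divide_le_eq mult.commute)
qed simp

lemma dist_sq_ge_normal_bundle:
  fixes M :: "'a::euclidean_space set"
  assumes "compact M" and inj: "inj_on (\<lambda>(p, v). p + v) (normal_bundle M r)"
    and pv: "(p, v) \<in> normal_bundle M t" and "0 < t" and "t < r" and "q \<in> M"
  shows "norm v ^ 2 + (r - t) / (r + t) * norm (q - p) ^ 2 \<le> norm (p + v - q) ^ 2"
proof -
  have "p \<in> M" and "v \<in> normal_space M p" and "norm v < t"
    using pv by (simp_all add: mem_normal_bundle)
  have "(r + t) * (v \<bullet> (q - p)) \<le> norm v * norm (q - p) ^ 2"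
    using inner_normal_le_within_reach[OF \<open>compact M\<close> inj \<open>p \<in> M\<close> \<open>v \<in> normal_space M p\<close>
        \<open>q \<in> M\<close>, of "(r + t) / 2"] \<open>0 < t\<close> \<open>t < r\<close>
    by (simp add: algebra_simps)
  also have "\<dots> \<le> t * norm (q - p) ^ 2"
    using \<open>norm v < t\<close> by (simp add: mult_right_mono)
  finally have "v \<bullet> (q - p) \<le> t / (r + t) * norm (q - p) ^ 2"
    using \<open>0 < t\<close> \<open>t < r\<close> by (simp add: field_simps)
  have "norm v ^ 2 + (r - t) / (r + t) * norm (q - p) ^ 2
      = norm v ^ 2 - 2 * (t / (r + t) * norm (q - p) ^ 2) + norm (q - p) ^ 2"
    using \<open>0 < t\<close> \<open>t < r\<close> by (simp add: field_simps)
  also have "\<dots> \<le> norm v ^ 2 - 2 * (v \<bullet> (q - p)) + norm (q - p) ^ 2"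
    using \<open>v \<bullet> (q - p) \<le> _\<close> by simp
  also have "\<dots> = norm (p + v - q) ^ 2"
    by (simp add: power2_norm_eq_inner algebra_simps inner_commute)
  finally show ?thesis .
qed

lemma infdist_Diff_ball_sq_ge:
  fixes M :: "'a::euclidean_space set"
  assumes "compact M" and inj: "inj_on (\<lambda>(p, v). p + v) (normal_bundle M r)"
    and pv: "(p, v) \<in> normal_bundle M t" and "0 < t" and "t < r" and "0 \<le> \<eta>"
    and "M - ball p \<eta> \<noteq> {}"
  shows "norm v ^ 2 + (r - t) / (r + t) * \<eta> ^ 2 \<le> infdist (p + v) (M - ball p \<eta>) ^ 2"
proof -
  have "closed (M - ball p \<eta>)" using \<open>compact M\<close> by (simp add: closed_Diff compact_imp_closed)
  then obtain q where "q \<in> M - ball p \<eta>" and "infdist (p + v) (M - ball p \<eta>) = dist (p + v) q"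
    using infdist_attains_inf \<open>M - ball p \<eta> \<noteq> {}\<close> by metis
  moreover from this have "q \<in> M" and "\<eta> \<le> norm (q - p)"
    by (auto simp: dist_norm norm_minus_commute)
  then have "(r - t) / (r + t) * \<eta> ^ 2 \<le> (r - t) / (r + t) * norm (q - p) ^ 2"
    using \<open>0 < t\<close> \<open>t < r\<close> \<open>0 \<le> \<eta>\<close> by (intro mult_left_mono power_mono) auto
  ultimately show ?thesis
    using dist_sq_ge_normal_bundle[OF \<open>compact M\<close> inj pv \<open>0 < t\<close> \<open>t < r\<close> \<open>q \<in> M\<close>]
    by (simp add: dist_norm)
qed

lemma tube_squared_dist_gap:
  fixes M :: "'a::euclidean_space set"
  assumes "compact M" and inj: "inj_on (\<lambda>(p, v). p + v) (normal_bundle M r)"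
    and "0 < t" and "t < r" and "0 < \<eta>" and "x \<in> tube M t"
  shows "ereal (1/2 * ((r - t) / (r + t)) * \<eta>^2)
    \<le> ereal (1/2) * (dist_set (M - ball (proj M x) \<eta>) x)^2 - ereal (1/2) * (dist_set M x)^2"
proof -
  obtain p v where pv: "(p, v) \<in> normal_bundle M t" and x: "x = p + v"
    using \<open>x \<in> tube M t\<close> by (auto simp: tube_def)
  then have pv': "(p, v) \<in> normal_bundle M r"
    using \<open>t < r\<close> by (simp add: mem_normal_bundle)
  have dist_M: "dist_set M x = ereal (norm v)"
    using pv infdist_normal_bundle[OF \<open>compact M\<close> inj pv']
    by (auto simp: dist_set_def x mem_normal_bundle)
  have proj: "proj M x = p" using proj_normal_bundle[OF \<open>compact M\<close> inj pv'] by (simp add: x)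
  show ?thesis
  proof (cases "M - ball p \<eta> = {}")
    case True
    then show ?thesis unfolding proj dist_M by (simp add: dist_set_def)
  next
    case False
    define c where "c = (r - t) / (r + t)"
    from False infdist_Diff_ball_sq_ge[OF \<open>compact M\<close> inj pv \<open>0 < t\<close> \<open>t < r\<close>] \<open>0 < \<eta>\<close>
    have "norm v ^ 2 + c * \<eta> ^ 2 \<le> infdist x (M - ball p \<eta>) ^ 2"
      by (simp add: x c_def)
    then have "1/2 * c * \<eta>^2 \<le> 1/2 * infdist x (M - ball p \<eta>) ^ 2 - 1/2 * norm v ^ 2"
      by linarith
    with False show ?thesis
      unfolding proj dist_M c_def[symmetric] by (simp add: dist_set_def power2_eq_square)
  qed
qed

theorem lemma5:
  fixes M :: "'a::euclidean_space set" and k :: nat and \<tau>M \<tau> \<eta> :: real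
  assumes "compact M" and "C2_submanifold k M"
    and "is_reach M \<tau>M" and "\<tau>M > 0"
    and "0 < \<tau>" and "\<tau> < \<tau>M" and "\<eta> > 0"
  shows "(INF x\<in>tube M \<tau>. ereal (1/2) * (dist_set (M - ball (proj M x) \<eta>) x)^2
                          - ereal (1/2) * (dist_set M x)^2)
           \<ge> ereal (1/2 * ((\<tau>M - \<tau>) / (\<tau>M + \<tau>)) * \<eta>^2)
       \<and> 1/2 * ((\<tau>M - \<tau>) / (\<tau>M + \<tau>)) * \<eta>^2 > 0"
proof
  have "inj_on (\<lambda>(p, v). p + v) (normal_bundle M \<tau>M)"
    using \<open>is_reach M \<tau>M\<close> by (simp add: is_reach_def tube_diffeo_def)
  then show "(INF x\<in>tube M \<tau>. ereal (1/2) * (dist_set (M - ball (proj M x) \<eta>) x)^2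
                          - ereal (1/2) * (dist_set M x)^2)
           \<ge> ereal (1/2 * ((\<tau>M - \<tau>) / (\<tau>M + \<tau>)) * \<eta>^2)"
    using tube_squared_dist_gap[OF \<open>compact M\<close>] assms(5-7) by (blast intro: INF_greatest)
  show "1/2 * ((\<tau>M - \<tau>) / (\<tau>M + \<tau>)) * \<eta>^2 > 0" using assms by simp
qed

end
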